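(* Let $k\ge3$, $d>0$, $m=\lceil dn/2\rceil$ and $p=m/\left(\binom n2(1-1/k)^2\right)$. Then for any events $\mathcal E=\mathcal E_n$ we have $\pi^{\mathrm{pr}}_{n,m}[\mathcal E]\leq O(\sqrt n)\,\tilde\pi_{n,p}[\mathcal E]+o(1)$, where the constant in $O(\cdot)$ and the $o(1)$ term do not depend on $\mathcal E$.
   Context: For maps $\sigma,\tau:[n]\to[k]$, $\mathcal F(\sigma,\tau)$ is the number of pairs $\{u,v\}\subset[n]$, $u\ne v$, with $\sigma(u)=\sigma(v)$ or $\tau(u)=\tau(v)$. The planted replica model $\pi^{\mathrm{pr}}_{n,m}$ is the distribution of $(\hat G,\hat\sigma_1,\hat\sigma_2)$ obtained by choosing $\hat\sigma_1,\hat\sigma_2:[n]\to[k]$ independently and uniformly subject to $\mathcal F(\hat\sigma_1,\hat\sigma_2)\le\binom n2-m$, and then a uniformly random graph $\hat G$ on $[n]$ with exactly $m$ edges subject to both $\hat\sigma_1,\hat\sigma_2$ being proper colorings. The binomial planted replica model $\tilde\pi_{n,p}$ is the distribution of $(\tilde G,\hat\sigma_1,\hat\sigma_2)$ obtained by choosing $\hat\sigma_1,\hat\sigma_2:[n]\to[k]$ independently and uniformly, and then including each of the $\binom n2-\mathcal F(\hat\sigma_1,\hat\sigma_2)$ pairs $\{u,v\}$ that are bichromatic under both $\hat\sigma_1$ and $\hat\sigma_2$ as an edge independently with probability $p$. *)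

theory Defs
  imports "HOL-Probability.Probability"
begin

text \<open>Vertex set [n] is rendered as {..<n}; colour set [k] as {..<k}.
  A graph on [n] is a set of 2-element subsets of {..<n}.\<close>

type_synonym graph = "nat set set"
type_synonym coloring = "nat \<Rightarrow> nat"

definition vpairs :: "nat \<Rightarrow> nat set set" where
  "vpairs n = {{u, v} | u v. u < n \<and> v < n \<and> u \<noteq> v}"

definition colorings :: "nat \<Rightarrow> nat \<Rightarrow> coloring set" where
  "colorings n k = ({..<n} \<rightarrow>\<^sub>E {..<k})"

definition Fmono :: "nat \<Rightarrow> coloring \<Rightarrow> coloring \<Rightarrow> nat" where
  "Fmono n \<sigma> \<tau> = card {e \<in> vpairs n. \<exists>u v. e = {u, v} \<and> u \<noteq> v \<and>
                          (\<sigma> u = \<sigma> v \<or> \<tau> u = \<tau> v)}"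

definition bichrom :: "nat \<Rightarrow> coloring \<Rightarrow> coloring \<Rightarrow> nat set set" where
  "bichrom n \<sigma> \<tau> = {e \<in> vpairs n. \<forall>u v. e = {u, v} \<and> u \<noteq> v \<longrightarrow>
                          \<sigma> u \<noteq> \<sigma> v \<and> \<tau> u \<noteq> \<tau> v}"

definition proper_coloring :: "graph \<Rightarrow> coloring \<Rightarrow> bool" where
  "proper_coloring G \<sigma> \<longleftrightarrow> (\<forall>u v. {u, v} \<in> G \<and> u \<noteq> v \<longrightarrow> \<sigma> u \<noteq> \<sigma> v)"

definition planted_replica :: "nat \<Rightarrow> nat \<Rightarrow> nat \<Rightarrow> (graph \<times> coloring \<times> coloring) pmf" where
  "planted_replica k n m =
     pmf_of_set {(s1, s2). s1 \<in> colorings n k \<and> s2 \<in> colorings n k \<and>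
                           Fmono n s1 s2 \<le> (n choose 2) - m} \<bind>
     (\<lambda>(s1, s2). map_pmf (\<lambda>G. (G, s1, s2))
        (pmf_of_set {G. G \<subseteq> vpairs n \<and> card G = m \<and>
                        proper_coloring G s1 \<and> proper_coloring G s2}))"

definition binom_planted_replica :: "nat \<Rightarrow> nat \<Rightarrow> real \<Rightarrow> (graph \<times> coloring \<times> coloring) pmf" where
  "binom_planted_replica k n p =
     pmf_of_set (colorings n k \<times> colorings n k) \<bind>
     (\<lambda>(s1, s2). map_pmf (\<lambda>b. ({e \<in> bichrom n s1 s2. b e}, s1, s2))
        (Pi_pmf (bichrom n s1 s2) False (\<lambda>_. bernoulli_pmf p)))"

end

theory Submission
  imports Defs
begin

text \<open>Given the colouring pair \<open>s = (\<sigma>\<^sub>1, \<sigma>\<^sub>2)\<close> and the number \<open>m\<close> of edges, both models are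
  uniform on the \<open>m\<close>-subsets of the \<open>B(s)\<close> pairs bichromatic under both colourings. So the planted
  model is an average over the admissible \<open>s\<close> of these conditional probabilities, while the binomial
  model dominates the average over all \<open>s\<close> of the same quantities weighted by
  \<open>P[Bin(B(s), p) = m]\<close>. The events that distinct pairs are bichromatic are pairwise independent,
  so \<open>B\<close> has variance at most \<open>n choose 2\<close>, and by Chebyshev all but a \<open>1/(2n)\<close> fraction of the
  colouring pairs have \<open>|B - E B| \<le> n\<^sup>3\<^sup>/\<^sup>2\<close>. For those a Stirling estimate gives
  \<open>P[Bin(B, p) = m] \<ge> c / \<surd>n\<close>, which produces the factor \<open>O(\<surd>n)\<close>; the exceptional pairs
  contribute the error term \<open>1/n\<close>.\<close>

section \<open>Counting colourings\<close>

lemma card_PiE_eq_on_retraction: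
  assumes "finite I" "J \<subseteq> I" "r ` J \<subseteq> I - J"
  shows "card {\<sigma> \<in> (I \<rightarrow>\<^sub>E A). \<forall>j\<in>J. \<sigma> j = \<sigma> (r j)} = card A ^ card (I - J)"
proof -
  let ?X = "{\<sigma> \<in> (I \<rightarrow>\<^sub>E A). \<forall>j\<in>J. \<sigma> j = \<sigma> (r j)}"
  define extend where "extend \<tau> = (\<lambda>i. if i \<in> I then (if i \<in> J then \<tau> (r i) else \<tau> i) else undefined)" for \<tau> :: "'a \<Rightarrow> 'b"
  have "bij_betw (\<lambda>\<sigma>. restrict \<sigma> (I - J)) ?X ((I - J) \<rightarrow>\<^sub>E A)"
  proof (rule bij_betw_byWitness[where f'=extend])
    show "\<forall>a\<in>?X. extend (restrict a (I - J)) = a"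
    proof
      fix a assume a: "a \<in> ?X"
      show "extend (restrict a (I - J)) = a"
      proof
        fix i show "extend (restrict a (I - J)) i = a i"
        proof (cases "i \<in> I")
          case True
          show ?thesis
          proof (cases "i \<in> J")
            case True
            then have "r i \<in> I - J" using assms(3) by blast
            then show ?thesis using True a \<open>i \<in> I\<close> by (simp add: extend_def)
          next
            case False
            then show ?thesis using \<open>i \<in> I\<close> by (simp add: extend_def)
          qed
        next
          case False
          have "a \<in> I \<rightarrow>\<^sub>E A" using a by blast
          then have "a i = undefined" using False by (rule PiE_arb)
          then show ?thesis using False by (simp add: extend_def)
        qed
      qed
    qed
    show "\<forall>a'\<in>((I - J) \<rightarrow>\<^sub>E A). restrict (extend a') (I - J) = a'"
    proof
      fix a' assume a': "a' \<in> (I - J) \<rightarrow>\<^sub>E A"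
      show "restrict (extend a') (I - J) = a'"
      proof
        fix i show "restrict (extend a') (I - J) i = a' i"
        proof (cases "i \<in> I - J")
          case True then show ?thesis by (simp add: extend_def)
        next
          case False
          then have "a' i = undefined" using a' by (meson PiE_arb)
          then show ?thesis using False by auto
        qed
      qed
    qed
    show "(\<lambda>\<sigma>. restrict \<sigma> (I - J)) ` ?X \<subseteq> ((I - J) \<rightarrow>\<^sub>E A)"
      by (auto simp: PiE_def)
    show "extend ` ((I - J) \<rightarrow>\<^sub>E A) \<subseteq> ?X"
    proof
      fix s assume "s \<in> extend ` ((I - J) \<rightarrow>\<^sub>E A)"
      then obtain t where t: "t \<in> (I - J) \<rightarrow>\<^sub>E A" and s: "s = extend t" by blast
      have rJ: "\<And>j. j \<in> J \<Longrightarrow> r j \<in> I - J" using assms(3) by blast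
      have "s \<in> I \<rightarrow>\<^sub>E A"
      proof (rule PiE_I)
        fix i assume "i \<in> I"
        show "s i \<in> A"
        proof (cases "i \<in> J")
          case True then show ?thesis using t rJ[OF True] \<open>i \<in> I\<close> by (auto simp: s extend_def)
        next
          case False then show ?thesis using t \<open>i \<in> I\<close> by (auto simp: s extend_def)
        qed
      next
        fix i assume "i \<notin> I" then show "s i = undefined" by (simp add: s extend_def)
      qed
      moreover have "\<forall>j\<in>J. s j = s (r j)"
      proof
        fix j assume j: "j \<in> J"
        then have "r j \<in> I - J" "j \<in> I" using rJ assms(2) by auto
        then show "s j = s (r j)" using j by (simp add: s extend_def)
      qed
      ultimately show "s \<in> ?X" by blast
    qed
  qed
  then have "card ?X = card ((I - J) \<rightarrow>\<^sub>E A)" by (rule bij_betw_same_card)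
  also have "\<dots> = card A ^ card (I - J)"
    using assms(1) by (simp add: card_PiE)
  finally show ?thesis .
qed

definition bichromatic :: "coloring \<Rightarrow> nat set \<Rightarrow> bool" where
  "bichromatic \<sigma> e \<longleftrightarrow> (\<forall>u v. e = {u, v} \<and> u \<noteq> v \<longrightarrow> \<sigma> u \<noteq> \<sigma> v)"

lemma bichromatic_doubleton: "u \<noteq> v \<Longrightarrow> bichromatic \<sigma> {u, v} \<longleftrightarrow> \<sigma> u \<noteq> \<sigma> v"
  unfolding bichromatic_def by (auto simp: doubleton_eq_iff)

lemma proper_coloring_iff_bichromatic: "proper_coloring G \<sigma> \<longleftrightarrow> (\<forall>e\<in>G. bichromatic \<sigma> e)"
  unfolding proper_coloring_def bichromatic_def by blast

lemma bichrom_eq: "bichrom n \<sigma> \<tau> = {e \<in> vpairs n. bichromatic \<sigma> e \<and> bichromatic \<tau> e}"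
  unfolding bichrom_def bichromatic_def by blast

lemma vpairsE:
  assumes "e \<in> vpairs n"
  obtains u v where "e = {u, v}" "u < n" "v < n" "u \<noteq> v"
  using assms unfolding vpairs_def by blast

lemma distinct_vpairsE:
  assumes "e \<in> vpairs n" "e' \<in> vpairs n" "e \<noteq> e'"
  obtains a b c d where "e = {a, b}" "e' = {c, d}" "a \<noteq> b" "c \<noteq> d" "b \<notin> {c, d}" "a \<noteq> d"
    "a < n" "b < n" "c < n" "d < n"
  \<comment> \<open>so that \<open>b \<mapsto> a, d \<mapsto> c\<close> maps \<open>{b, d}\<close> outside \<open>{b, d}\<close>, as \<open>card_PiE_eq_on_retraction\<close> needs\<close>
proof -
  obtain u v where uv: "e = {u, v}" "u < n" "v < n" "u \<noteq> v" using assms(1) by (rule vpairsE)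
  obtain w z where wz: "e' = {w, z}" "w < n" "z < n" "w \<noteq> z" using assms(2) by (rule vpairsE)
  obtain a b where ab: "e = {a, b}" "a \<noteq> b" "b \<notin> e'" "a < n" "b < n"
  proof (cases "v \<in> e'")
    case True
    then have "u \<notin> e'" using uv wz assms(3) by (auto simp: doubleton_eq_iff)
    then show thesis using that[of v u] uv by (simp add: insert_commute)
  next
    case False
    then show thesis using that[of u v] uv by simp
  qed
  obtain c d where cd: "e' = {c, d}" "c \<noteq> d" "a \<noteq> d" "c < n" "d < n"
  proof (cases "z = a")
    case True
    then show thesis using that[of z w] wz by (simp add: insert_commute)
  next
    case False
    then show thesis using that[of w z] wz by simp
  qed
  show thesis by (rule that[of a b c d]) (use ab cd in simp_all)
qed

lemma finite_vpairs: "finite (vpairs n)"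
  by (rule finite_subset[of _ "Pow {..<n}"]) (auto simp: vpairs_def)

lemma card_vpairs: "card (vpairs n) = n choose 2"
proof -
  have "vpairs n = {A. A \<subseteq> {..<n} \<and> card A = 2}"
    unfolding vpairs_def by (auto simp: card_2_iff)
  then show ?thesis by (simp add: n_subsets)
qed

lemma choose_two_real: "2 * real (n choose 2) = real n * (real n - 1)"
proof (cases n)
  case (Suc n')
  have "even (n * (n - 1))" by (cases "even n") auto
  then have "2 * (n choose 2) = n * (n - 1)" by (simp add: choose_two)
  then have "real (2 * (n choose 2)) = real (n * (n - 1))" by (simp only:)
  then show ?thesis using Suc by (simp add: of_nat_diff algebra_simps)
qed simp

lemma finite_colorings: "finite (colorings n k)"
  by (simp add: colorings_def finite_PiE)

lemma card_colorings: "card (colorings n k) = k ^ n"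
  by (simp add: colorings_def card_PiE)

lemma bichrom_subset_vpairs: "bichrom n \<sigma> \<tau> \<subseteq> vpairs n"
  unfolding bichrom_def by blast

lemma finite_bichrom: "finite (bichrom n \<sigma> \<tau>)"
  by (rule finite_subset[OF bichrom_subset_vpairs finite_vpairs])

lemma card_not_bichromatic:
  assumes "e \<in> vpairs n"
  shows "card {\<sigma> \<in> colorings n k. \<not> bichromatic \<sigma> e} = k ^ (n - 1)"
proof -
  obtain u v where e: "e = {u, v}" "u < n" "v < n" "u \<noteq> v" using assms by (rule vpairsE)
  have "{\<sigma> \<in> colorings n k. \<not> bichromatic \<sigma> e}
      = {\<sigma> \<in> {..<n} \<rightarrow>\<^sub>E {..<k}. \<forall>j\<in>{v}. \<sigma> j = \<sigma> ((\<lambda>_. u) j)}"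
    unfolding e(1) bichromatic_doubleton[OF e(4)] colorings_def by (auto simp: eq_commute)
  also have "card \<dots> = k ^ card ({..<n} - {v})"
    using e by (subst card_PiE_eq_on_retraction) auto
  finally show ?thesis using e by simp
qed

lemma card_not_bichromatic_two:
  assumes "e \<in> vpairs n" "e' \<in> vpairs n" "e \<noteq> e'"
  shows "card {\<sigma> \<in> colorings n k. \<not> bichromatic \<sigma> e \<and> \<not> bichromatic \<sigma> e'} = k ^ (n - 2)"
proof -
  obtain a b c d where e: "e = {a, b}" "e' = {c, d}" "a \<noteq> b" "c \<noteq> d" "b \<notin> {c, d}" "a \<noteq> d"
    "a < n" "b < n" "c < n" "d < n"
    using assms by (rule distinct_vpairsE)
  define r where "r j = (if j = b then a else c)" for j
  have "{\<sigma> \<in> colorings n k. \<not> bichromatic \<sigma> e \<and> \<not> bichromatic \<sigma> e'}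
      = {\<sigma> \<in> {..<n} \<rightarrow>\<^sub>E {..<k}. \<forall>j\<in>{b, d}. \<sigma> j = \<sigma> (r j)}"
    unfolding e(1,2) bichromatic_doubleton[OF e(3)] bichromatic_doubleton[OF e(4)] colorings_def
    using e(5) by (auto simp: r_def eq_commute)
  also have "card \<dots> = k ^ card ({..<n} - {b, d})"
    using e by (subst card_PiE_eq_on_retraction) (auto simp: r_def)
  also have "card ({..<n} - {b, d}) = n - 2"
    using e by (simp add: card_Diff_subset)
  finally show ?thesis .
qed

lemma sum_bichromatic:
  assumes "e \<in> vpairs n" "k \<ge> 1"
  shows "(\<Sum>\<sigma>\<in>colorings n k. of_bool (bichromatic \<sigma> e) :: real) = real k ^ n * (1 - 1 / real k)"
proof -
  have n: "n \<ge> 2" using assms(1) by (auto elim: vpairsE)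
  let ?C = "colorings n k"
  have "(\<Sum>\<sigma>\<in>?C. of_bool (bichromatic \<sigma> e) :: real) = (\<Sum>\<sigma>\<in>?C. 1 - of_bool (\<not> bichromatic \<sigma> e))"
    by (rule sum.cong) auto
  also have "\<dots> = real (card ?C) - real (card {\<sigma> \<in> ?C. \<not> bichromatic \<sigma> e})"
    by (simp add: sum_subtractf finite_colorings Int_def conj_commute)
  also have "\<dots> = real k ^ n - real k ^ (n - 1)"
    by (simp add: card_not_bichromatic[OF assms(1)] card_colorings)
  also have "\<dots> = real k ^ n * (1 - 1 / real k)"
  proof -
    have "real k ^ n = real k * real k ^ (n - 1)"
      using n by (metis Suc_diff_1 less_le_trans pos2 power_Suc)
    then show ?thesis using assms(2) by (simp add: field_simps)
  qed
  finally show ?thesis .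
qed

lemma sum_bichromatic_two:
  assumes "e \<in> vpairs n" "e' \<in> vpairs n" "e \<noteq> e'" "k \<ge> 1"
  shows "(\<Sum>\<sigma>\<in>colorings n k. of_bool (bichromatic \<sigma> e) * of_bool (bichromatic \<sigma> e') :: real)
    = real k ^ n * (1 - 1 / real k)^2"
proof -
  have "n \<ge> 2" using assms(1) by (auto elim: vpairsE)
  then obtain j where j: "n = j + 2" by (metis add.commute le_Suc_ex)
  let ?C = "colorings n k"
  let ?M = "\<lambda>e. {\<sigma> \<in> ?C. \<not> bichromatic \<sigma> e}"
  have "(\<Sum>\<sigma>\<in>?C. of_bool (bichromatic \<sigma> e) * of_bool (bichromatic \<sigma> e') :: real)
      = (\<Sum>\<sigma>\<in>?C. 1 - of_bool (\<not> bichromatic \<sigma> e) - of_bool (\<not> bichromatic \<sigma> e')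
                   + of_bool (\<not> bichromatic \<sigma> e \<and> \<not> bichromatic \<sigma> e'))"
    by (rule sum.cong) auto
  also have "\<dots> = real (card ?C) - real (card (?M e)) - real (card (?M e'))
      + real (card {\<sigma> \<in> ?C. \<not> bichromatic \<sigma> e \<and> \<not> bichromatic \<sigma> e'})"
    by (simp add: sum_subtractf sum.distrib finite_colorings Int_def conj_commute)
  also have "\<dots> = real k ^ n - 2 * real k ^ (n - 1) + real k ^ (n - 2)"
    by (simp add: card_not_bichromatic[OF assms(1)] card_not_bichromatic[OF assms(2)]
        card_not_bichromatic_two[OF assms(1-3)] card_colorings)
  also have "\<dots> = real k ^ n * (1 - 1 / real k)^2"
    using assms(4) unfolding j by (simp add: field_simps power2_eq_square)
  finally show ?thesis .
qed

section \<open>Concentration of the number of bichromatic pairs\<close>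

lemma sum_cartesian_product_mult:
  fixes f g :: "'a \<Rightarrow> 'b :: comm_semiring_0"
  shows "(\<Sum>s\<in>A \<times> B. f (fst s) * g (snd s)) = sum f A * sum g B"
  by (simp add: sum.cartesian_product' sum_product)

definition bichrom_ind :: "coloring \<times> coloring \<Rightarrow> nat set \<Rightarrow> real" where
  "bichrom_ind s e = of_bool (bichromatic (fst s) e) * of_bool (bichromatic (snd s) e)"

lemma card_bichrom_eq_sum: "real (card (bichrom n \<sigma> \<tau>)) = (\<Sum>e\<in>vpairs n. bichrom_ind (\<sigma>, \<tau>) e)"
proof -
  have "(\<Sum>e\<in>vpairs n. bichrom_ind (\<sigma>, \<tau>) e) = (\<Sum>e\<in>vpairs n. of_bool (e \<in> bichrom n \<sigma> \<tau>))"
    by (rule sum.cong) (auto simp: bichrom_ind_def bichrom_eq)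
  also have "\<dots> = real (card (bichrom n \<sigma> \<tau>))"
    by (simp add: finite_vpairs bichrom_eq Int_def)
  finally show ?thesis ..
qed

lemma sum_bichrom_ind_covariance:
  assumes "e \<in> vpairs n" "e' \<in> vpairs n" "k \<ge> 1"
  defines "q \<equiv> (1 - 1 / real k)^2"
  shows "(\<Sum>s\<in>colorings n k \<times> colorings n k. (bichrom_ind s e - q) * (bichrom_ind s e' - q))
       = (if e = e' then (real k ^ n)^2 * q * (1 - q) else 0)"
proof -
  let ?S = "colorings n k \<times> colorings n k"
  let ?K = "real k ^ n"
  have card_S: "real (card ?S) = ?K^2"
    by (simp add: card_cartesian_product card_colorings power2_eq_square)
  have mean: "(\<Sum>s\<in>?S. bichrom_ind s e) = ?K^2 * q" if "e \<in> vpairs n" for e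
  proof -
    have "(\<Sum>s\<in>?S. bichrom_ind s e)
        = (\<Sum>\<sigma>\<in>colorings n k. of_bool (bichromatic \<sigma> e)) * (\<Sum>\<sigma>\<in>colorings n k. of_bool (bichromatic \<sigma> e))"
      unfolding bichrom_ind_def by (rule sum_cartesian_product_mult)
    then show ?thesis
      using sum_bichromatic[OF that assms(3)] by (simp add: q_def power2_eq_square)
  qed
  have expand: "(\<Sum>s\<in>?S. (bichrom_ind s e - q) * (bichrom_ind s e' - q))
      = (\<Sum>s\<in>?S. bichrom_ind s e * bichrom_ind s e') - q * (\<Sum>s\<in>?S. bichrom_ind s e)
        - q * (\<Sum>s\<in>?S. bichrom_ind s e') + real (card ?S) * q^2"
    by (simp add: algebra_simps sum.distrib sum_subtractf sum_distrib_left power2_eq_square)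
  show ?thesis
  proof (cases "e = e'")
    case True
    have "(\<Sum>s\<in>?S. bichrom_ind s e * bichrom_ind s e) = (\<Sum>s\<in>?S. bichrom_ind s e)"
      by (rule sum.cong) (auto simp: bichrom_ind_def)
    then show ?thesis
      using True expand mean[OF assms(1)] card_S by (simp add: algebra_simps power2_eq_square)
  next
    case False
    have "(\<Sum>s\<in>?S. bichrom_ind s e * bichrom_ind s e')
        = (\<Sum>s\<in>?S. (of_bool (bichromatic (fst s) e) * of_bool (bichromatic (fst s) e'))
                  * (of_bool (bichromatic (snd s) e) * of_bool (bichromatic (snd s) e')))"
      by (rule sum.cong) (auto simp: bichrom_ind_def)
    also have "\<dots> = (\<Sum>\<sigma>\<in>colorings n k. of_bool (bichromatic \<sigma> e) * of_bool (bichromatic \<sigma> e'))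
                    * (\<Sum>\<sigma>\<in>colorings n k. of_bool (bichromatic \<sigma> e) * of_bool (bichromatic \<sigma> e'))"
      by (rule sum_cartesian_product_mult)
    also have "\<dots> = ?K^2 * q^2"
      unfolding sum_bichromatic_two[OF assms(1,2) False assms(3)] by (simp add: q_def power2_eq_square)
    finally show ?thesis
      using False expand mean[OF assms(1)] mean[OF assms(2)] card_S
      by (simp add: algebra_simps power2_eq_square)
  qed
qed

lemma sum_sq_deviation_card_bichrom:
  assumes "k \<ge> 1"
  defines "q \<equiv> (1 - 1 / real k)^2"
  shows "(\<Sum>s\<in>colorings n k \<times> colorings n k.
            (real (card (bichrom n (fst s) (snd s))) - real (n choose 2) * q)^2)
       = real (n choose 2) * (real k ^ n)^2 * q * (1 - q)"
proof -
  let ?S = "colorings n k \<times> colorings n k"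
  let ?V = "vpairs n"
  have deviation: "real (card (bichrom n (fst s) (snd s))) - real (n choose 2) * q
      = (\<Sum>e\<in>?V. bichrom_ind s e - q)" for s
    using card_bichrom_eq_sum[of n "fst s" "snd s"] by (simp add: sum_subtractf card_vpairs)
  have "(\<Sum>s\<in>?S. (real (card (bichrom n (fst s) (snd s))) - real (n choose 2) * q)^2)
      = (\<Sum>s\<in>?S. \<Sum>e\<in>?V. \<Sum>e'\<in>?V. (bichrom_ind s e - q) * (bichrom_ind s e' - q))"
    by (simp only: deviation power2_eq_square sum_product)
  also have "\<dots> = (\<Sum>e\<in>?V. \<Sum>e'\<in>?V. \<Sum>s\<in>?S. (bichrom_ind s e - q) * (bichrom_ind s e' - q))"
    by (simp add: sum.swap[of _ ?S])
  also have "\<dots> = (\<Sum>e\<in>?V. \<Sum>e'\<in>?V. if e = e' then (real k ^ n)^2 * q * (1 - q) else 0)"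
    unfolding q_def by (intro sum.cong refl sum_bichrom_ind_covariance assms(1))
  also have "\<dots> = real (n choose 2) * (real k ^ n)^2 * q * (1 - q)"
    by (simp add: finite_vpairs card_vpairs)
  finally show ?thesis .
qed

lemma card_large_deviation_bichrom_le:
  fixes n k :: nat and t :: real
  assumes "k \<ge> 1" "t > 0"
  defines "N0 \<equiv> real (n choose 2) * (1 - 1 / real k)^2"
  shows "real (card {s \<in> colorings n k \<times> colorings n k.
                      t < (real (card (bichrom n (fst s) (snd s))) - N0)^2})
     \<le> real (n choose 2) * real (card (colorings n k \<times> colorings n k)) / t"
proof -
  let ?S = "colorings n k \<times> colorings n k"
  let ?dev = "\<lambda>s. (real (card (bichrom n (fst s) (snd s))) - N0)^2"
  let ?q = "(1 - 1 / real k)^2"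
  have q: "0 \<le> ?q" "?q \<le> 1"
    using assms(1) by (auto simp: field_simps power_le_one)
  have "real (card {s \<in> ?S. t < ?dev s}) * t = (\<Sum>s\<in>{s \<in> ?S. t < ?dev s}. t)"
    by simp
  also have "\<dots> \<le> (\<Sum>s\<in>{s \<in> ?S. t < ?dev s}. ?dev s)"
    by (rule sum_mono) auto
  also have "\<dots> \<le> (\<Sum>s\<in>?S. ?dev s)"
    by (rule sum_mono2) (auto simp: finite_colorings)
  also have "\<dots> = real (n choose 2) * (real k ^ n)^2 * (?q * (1 - ?q))"
    unfolding N0_def sum_sq_deviation_card_bichrom[OF assms(1)] by (simp add: mult.assoc)
  also have "\<dots> \<le> real (n choose 2) * (real k ^ n)^2"
    using q by (intro mult_left_le) (auto intro: mult_le_one)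
  also have "\<dots> = real (n choose 2) * real (card ?S)"
    by (simp add: card_cartesian_product card_colorings power2_eq_square)
  finally show ?thesis
    using assms(2) by (simp add: field_simps)
qed

lemma card_bichrom_far_from_mean_le:
  fixes n k :: nat
  assumes "1 \<le> k" "1 \<le> n"
  defines "N0 \<equiv> real (n choose 2) * (1 - 1 / real k)^2"
  shows "real (card {s \<in> colorings n k \<times> colorings n k.
                      real n ^ 3 < (real (card (bichrom n (fst s) (snd s))) - N0)^2})
     \<le> 1 / (2 * real n) * real (card (colorings n k \<times> colorings n k))"
proof -
  let ?S = "colorings n k \<times> colorings n k"
  have "real (card {s \<in> ?S. real n ^ 3 < (real (card (bichrom n (fst s) (snd s))) - N0)^2})
      \<le> real (n choose 2) * real (card ?S) / real n ^ 3"
    unfolding N0_def using assms(1,2) by (intro card_large_deviation_bichrom_le) auto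
  also have "\<dots> \<le> real n ^ 2 / 2 * real (card ?S) / real n ^ 3"
    using choose_two_real[of n] by (intro divide_right_mono mult_right_mono) (auto simp: power2_eq_square right_diff_distrib)
  also have "\<dots> = 1 / (2 * real n) * real (card ?S)"
    using assms(2) by (simp add: power2_eq_square power3_eq_cube field_simps)
  finally show ?thesis .
qed

section \<open>Lower bounds for binomial point probabilities\<close>

lemma ln_add_one_ge_pade:
  fixes x :: real
  assumes "0 \<le> x"
  shows "2 * x / (2 + x) \<le> ln (1 + x)"
proof -
  let ?f = "\<lambda>t::real. ln (1 + t) - 2 * t / (2 + t)"
  have "?f 0 \<le> ?f x"
  proof (rule DERIV_nonneg_imp_nondecreasing[OF assms])
    fix t :: real assume t: "0 \<le> t" "t \<le> x"
    have "DERIV ?f t :> (1 / (1 + t) - (2 * (2 + t) - 2 * t) / (2 + t)^2)"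
      using t by (auto intro!: derivative_eq_intros simp: power2_eq_square)
    moreover have "1 / (1 + t) - (2 * (2 + t) - 2 * t) / (2 + t)^2 = t^2 / ((1 + t) * (2 + t)^2)"
      using t by (simp add: divide_simps power2_eq_square) (simp add: algebra_simps)
    moreover have "t^2 / ((1 + t) * (2 + t)^2) \<ge> 0"
      using t by simp
    ultimately show "\<exists>y. DERIV ?f t :> y \<and> y \<ge> 0"
      by auto
  qed
  then show ?thesis by simp
qed

text \<open>From \<open>m\<close> to \<open>m + 1\<close> the right-hand side grows by at least \<open>ln (m + 1)\<close>: this is the
  Pad\'e bound above at \<open>x = 1 / m\<close>.\<close>
lemma ln_fact_le:
  assumes "1 \<le> m"
  shows "ln (fact m) \<le> 1 - real m + (real m + 1/2) * ln (real m)"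
  using assms
proof (induction m rule: dec_induct)
  case base
  then show ?case by simp
next
  case (step m)
  have m: "real m \<ge> 1" using step.hyps by simp
  have "1 = (real m + 1/2) * (2 * (1 / real m) / (2 + 1 / real m))"
    using m by (simp add: field_simps)
  also have "\<dots> \<le> (real m + 1/2) * ln (1 + 1 / real m)"
    using m by (intro mult_left_mono ln_add_one_ge_pade) auto
  also have "ln (1 + 1 / real m) = ln (real m + 1) - ln (real m)"
    using m by (simp add: ln_div field_simps)
  finally have step_gain: "1 \<le> (real m + 1/2) * (ln (real m + 1) - ln (real m))" .
  have "ln (fact (Suc m)) = ln (real m + 1) + ln (fact m)"
    using m by (simp add: ln_mult add.commute)
  also have "\<dots> \<le> ln (real m + 1) + 1 - real m + (real m + 1/2) * ln (real m)"
    using step.IH by simp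
  also have "\<dots> \<le> 1 - real (Suc m) + (real (Suc m) + 1/2) * ln (real (Suc m))"
    using step_gain by (simp add: algebra_simps)
  finally show ?case .
qed

lemma pow_diff_mult_fact_le_fact: "m \<le> N \<Longrightarrow> (N - m) ^ m * fact (N - m) \<le> (fact N :: nat)"
proof (induction m)
  case 0
  then show ?case by simp
next
  case (Suc m)
  have "(N - Suc m) ^ Suc m * fact (N - Suc m) = (N - Suc m) ^ m * ((N - Suc m) * fact (N - Suc m))"
    by simp
  also have "\<dots> \<le> (N - m) ^ m * fact (N - m)"
  proof (rule mult_mono)
    show "(N - Suc m) ^ m \<le> (N - m) ^ m" by (rule power_mono) auto
    have "N - m = Suc (N - Suc m)" using Suc.prems by simp
    then show "(N - Suc m) * fact (N - Suc m) \<le> fact (N - m)" by simp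
  qed auto
  also have "\<dots> \<le> fact N"
    using Suc by simp
  finally show ?case .
qed

lemma pow_diff_le_fact_mult_choose:
  assumes "m \<le> N"
  shows "(N - m) ^ m \<le> fact m * (N choose m)"
proof -
  have "(N - m) ^ m * fact (N - m) \<le> fact m * (N choose m) * fact (N - m)"
    using pow_diff_mult_fact_le_fact[OF assms] binomial_fact_lemma[OF assms] by (simp add: algebra_simps)
  then show ?thesis by simp
qed

lemma binomial_point_lower:
  fixes N m :: nat and p :: real
  assumes m1: "1 \<le> m" and mN: "2 * m \<le> N" and p0: "0 < p" and p1: "p \<le> 1/2"
    and eps: "\<bar>real N * p / real m - 1\<bar> \<le> 1/2"
  defines "\<epsilon> \<equiv> real N * p / real m - 1"
  shows "exp (- (2 * real m * \<epsilon>^2 + 2 * real m^2 / real N + 2 * real N * p^2 + 1)) / sqrt (real m)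
         \<le> real (N choose m) * p ^ m * (1 - p) ^ (N - m)"
proof -
  have mpos: "real m > 0" using m1 by simp
  have Npos: "real N > 0" using mN m1 by simp
  have mleN: "m \<le> N" using mN by simp
  define x where "x = real m / real N"
  have x0: "0 \<le> x" and x1: "x \<le> 1/2" using mN Npos by (auto simp: x_def field_simps)
  have Cpos: "real (N choose m) > 0" using mleN by simp
  have Nm_pos: "real (N - m) > 0" using mN m1 by simp
  have lnC: "real m * ln (real (N - m)) \<le> ln (fact m) + ln (real (N choose m))"
  proof -
    have "real (N - m) ^ m \<le> fact m * real (N choose m)"
      using pow_diff_le_fact_mult_choose[OF mleN] by (metis of_nat_fact of_nat_le_iff of_nat_mult of_nat_power)
    then have "ln (real (N - m) ^ m) \<le> ln (fact m * real (N choose m))"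
      using Nm_pos Cpos by (subst ln_le_cancel_iff) auto
    then show ?thesis using Cpos by (simp add: ln_realpow ln_mult)
  qed
  have lnNm: "ln (real (N - m)) = ln (real N) + ln (1 - x)"
  proof -
    have "real (N - m) = real N * (1 - x)" using mleN Npos by (simp add: x_def field_simps of_nat_diff)
    moreover have "1 - x > 0" using x1 by simp
    ultimately show ?thesis using Npos by (simp add: ln_mult)
  qed
  have Np: "real N * p = real m * (1 + \<epsilon>)" using mpos by (simp add: \<epsilon>_def field_simps)
  have lnNp: "ln (real N) + ln p = ln (real m) + ln (1 + \<epsilon>)"
  proof -
    have "1 + \<epsilon> > 0" using eps unfolding \<epsilon>_def by linarith
    then show ?thesis using Np Npos p0 mpos by (metis ln_mult_pos)
  qed
  have l1: "ln (1 + \<epsilon>) \<ge> \<epsilon> - 2 * \<epsilon>^2"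
    using abs_ln_one_plus_x_minus_x_bound[of \<epsilon>] eps by (simp add: \<epsilon>_def abs_le_iff)
  have l2: "ln (1 - x) \<ge> - 2 * x"
  proof -
    have "ln (1 - x) \<ge> - x - 2 * x^2" by (rule ln_one_minus_pos_lower_bound[OF x0 x1])
    moreover have "2 * x^2 \<le> x" using x0 x1 mult_left_mono[of x "1/2" "2 * x"] by (simp add: power2_eq_square)
    ultimately show ?thesis by simp
  qed
  have l3: "real (N - m) * ln (1 - p) \<ge> real N * (- p - 2 * p^2)"
  proof -
    have "ln (1 - p) \<ge> - p - 2 * p^2" by (rule ln_one_minus_pos_lower_bound) (use p0 p1 in auto)
    moreover have "real (N - m) * ln (1 - p) \<ge> real N * ln (1 - p)"
      using p0 p1 mleN by (intro mult_right_mono_neg) auto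
    ultimately show ?thesis
      using mult_left_mono[of "- p - 2 * p^2" "ln (1 - p)" "real N"] by linarith
  qed
  have lf: "ln (fact m) \<le> 1 - real m + (real m + 1/2) * ln (real m)"
    by (rule ln_fact_le[OF m1])
  define \<beta> where "\<beta> = real (N choose m) * p ^ m * (1 - p) ^ (N - m)"
  have bpos: "\<beta> > 0" using Cpos p0 p1 by (simp add: \<beta>_def)
  have lnb: "ln \<beta> = ln (real (N choose m)) + real m * ln p + real (N - m) * ln (1 - p)"
    using Cpos p0 p1 by (simp add: \<beta>_def ln_mult ln_realpow)
  have "real m * (ln (real m) + (\<epsilon> - 2 * \<epsilon>^2) + (- 2 * x))
      \<le> real m * (ln (real m) + ln (1 + \<epsilon>) + ln (1 - x))"
    using l1 l2 mpos by (intro mult_left_mono) auto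
  also have "\<dots> = real m * ln (real (N - m)) + real m * ln p"
    using lnNm arg_cong[OF lnNp, of "\<lambda>t. real m * t"] by (simp add: algebra_simps)
  finally have "ln \<beta> \<ge> real m * (ln (real m) + (\<epsilon> - 2 * \<epsilon>^2) + (- 2 * x))
      - (1 - real m + (real m + 1/2) * ln (real m)) - real N * p - 2 * real N * p^2"
    using lnb lnC l3 lf by (simp add: algebra_simps)
  also have "real m * (ln (real m) + (\<epsilon> - 2 * \<epsilon>^2) + (- 2 * x)) - (1 - real m + (real m + 1/2) * ln (real m))
       - real N * p - 2 * real N * p^2
      = - (2 * real m * \<epsilon>^2 + 2 * real m^2 / real N + 2 * real N * p^2 + 1) - ln (real m) / 2"
    using Np by (simp add: x_def power2_eq_square algebra_simps)
  finally have "exp (- (2 * real m * \<epsilon>^2 + 2 * real m^2 / real N + 2 * real N * p^2 + 1) - ln (real m) / 2) \<le> \<beta>"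
    using bpos by (metis exp_le_cancel_iff exp_ln)
  moreover have "exp (ln (real m) / 2) = sqrt (real m)"
    using mpos by (simp add: powr_half_sqrt[symmetric] powr_def)
  ultimately show ?thesis
    by (simp add: \<beta>_def exp_diff)
qed

lemma expected_bichrom_ge:
  assumes "3 \<le> k" "2 \<le> n"
  shows "real n ^ 2 / 9 \<le> real (n choose 2) * (1 - 1 / real k)^2"
proof -
  have "2/3 \<le> 1 - 1 / real k" using assms(1) by (simp add: field_simps)
  then have "4/9 \<le> (1 - 1 / real k)^2"
    using power_mono[of "2/3" "1 - 1 / real k" 2] by (simp add: power2_eq_square)
  moreover have "real n ^ 2 / 4 \<le> real (n choose 2)"
  proof -
    have "2 * real n \<le> real n * real n"
      using assms(2) mult_right_mono[of 2 "real n" "real n"] by simp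
    then show ?thesis using choose_two_real[of n] by (simp add: power2_eq_square field_simps)
  qed
  ultimately have "real n ^ 2 / 4 * (4/9) \<le> real (n choose 2) * (1 - 1 / real k)^2"
    by (intro mult_mono) auto
  then show ?thesis by simp
qed

lemma nat_ceiling_half_bounds:
  fixes x :: real
  assumes "2 \<le> x"
  shows "x / 2 \<le> real (nat \<lceil>x / 2\<rceil>)" "real (nat \<lceil>x / 2\<rceil>) \<le> x"
proof -
  have "real (nat \<lceil>x / 2\<rceil>) = real_of_int \<lceil>x / 2\<rceil>" using assms by simp
  moreover have "x / 2 \<le> real_of_int \<lceil>x / 2\<rceil>" "real_of_int \<lceil>x / 2\<rceil> \<le> x / 2 + 1"
    by (simp_all add: of_int_ceiling_le_add_one)
  ultimately show "x / 2 \<le> real (nat \<lceil>x / 2\<rceil>)" "real (nat \<lceil>x / 2\<rceil>) \<le> x"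
    using assms by linarith+
qed

lemma near_mean_bounds:
  fixes N :: nat and n N0 :: real
  assumes n: "324 \<le> n" and N0: "n ^ 2 / 9 \<le> N0" and near: "(real N - N0)^2 \<le> n ^ 3"
  shows "((real N - N0) / N0)^2 \<le> 81 / n" "\<bar>(real N - N0) / N0\<bar> \<le> 1/2"
    "N0 / 2 \<le> real N" "real N \<le> 3 / 2 * N0"
proof -
  have "0 < n ^ 2 / 9" using n by simp
  with N0 have N0pos: "0 < N0" by linarith
  have "((real N - N0) / N0)^2 = (real N - N0)^2 / N0^2" by (simp add: power_divide)
  also have "\<dots> \<le> n ^ 3 / (n ^ 2 / 9)^2"
    using near N0 n by (intro frac_le) (auto intro: power_mono)
  also have "\<dots> = 81 / n" using n by (simp add: power2_eq_square power3_eq_cube field_simps)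
  finally show rel: "((real N - N0) / N0)^2 \<le> 81 / n" .
  have "81 / n \<le> (1/2)^2" using n by (simp add: divide_le_eq power_divide)
  with rel have "\<bar>(real N - N0) / N0\<bar>^2 \<le> (1/2)^2" by (metis power2_abs order_trans)
  then show rel_abs: "\<bar>(real N - N0) / N0\<bar> \<le> 1/2" by (rule power2_le_imp_le) simp
  have "\<bar>real N - N0\<bar> = \<bar>(real N - N0) / N0\<bar> * N0" using N0pos by (simp add: abs_divide)
  also have "\<dots> \<le> 1/2 * N0" using rel_abs N0pos by (intro mult_right_mono) auto
  finally have "\<bar>real N - N0\<bar> \<le> N0 / 2" by simp
  then show "N0 / 2 \<le> real N" "real N \<le> 3 / 2 * N0" by linarith+
qed

lemma binomial_point_lower_near_mean:
  fixes N m n :: nat and d N0 :: real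
  assumes n: "324 \<le> real n" "36 * d \<le> real n" and d: "0 < d"
    and N0: "real n ^ 2 / 9 \<le> N0"
    and m: "d * real n / 2 \<le> real m" "real m \<le> d * real n"
    and near: "(real N - N0)^2 \<le> real n ^ 3"
  defines "p \<equiv> real m / N0"
  shows "m \<le> N" "0 < p" "p \<le> 1"
    "exp (- (162 * d + 63 * d^2 + 1)) / (sqrt d * sqrt (real n))
       \<le> real (N choose m) * p ^ m * (1 - p) ^ (N - m)"
proof -
  note bounds = near_mean_bounds[OF n(1) N0 near]
  have nr: "0 < real n" using n by simp
  have "0 < real n ^ 2 / 9" using nr by simp
  with N0 have N0pos: "0 < N0" by linarith
  have "0 < d * real n" using d nr by simp
  with m have mpos: "0 < real m" by linarith
  have "2 * real m \<le> real n * (2 * d)" using m by (simp add: algebra_simps)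
  also have "\<dots> \<le> real n * (real n / 18)" using n nr by (intro mult_left_mono) auto
  also have "\<dots> \<le> real N" using bounds(3) N0 by (simp add: power2_eq_square)
  finally have mN: "2 * m \<le> N" by linarith
  then show "m \<le> N" by simp
  show p0: "0 < p" using mpos N0pos by (simp add: p_def)
  have p_hi: "p \<le> 9 * d / real n"
  proof -
    have "p \<le> d * real n / (real n ^ 2 / 9)"
      unfolding p_def using m mpos nr N0 by (intro frac_le) auto
    also have "\<dots> = 9 * d / real n" using nr by (simp add: power2_eq_square field_simps)
    finally show ?thesis .
  qed
  also have "9 * d / real n \<le> 1/2" using n nr by (simp add: divide_le_eq)
  finally have p1: "p \<le> 1/2" .
  then show "p \<le> 1" by simp
  define \<epsilon> where "\<epsilon> = real N * p / real m - 1"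
  have eps: "\<epsilon> = (real N - N0) / N0" using mpos N0pos by (simp add: \<epsilon>_def p_def field_simps)
  have K1: "2 * real m * \<epsilon>^2 \<le> 162 * d"
  proof -
    have "2 * real m * \<epsilon>^2 \<le> 2 * (d * real n) * (81 / real n)"
      using m bounds(1) mpos unfolding eps by (intro mult_mono) auto
    then show ?thesis using nr by simp
  qed
  have K2: "2 * real m^2 / real N \<le> 36 * d^2"
  proof -
    have "2 * real m^2 / real N \<le> 2 * (d * real n)^2 / (real n ^ 2 / 18)"
      using m mpos bounds(3) N0 nr by (intro frac_le) (auto intro!: power_mono)
    also have "\<dots> = 36 * d^2" using nr by (simp add: power2_eq_square field_simps)
    finally show ?thesis .
  qed
  have K3: "2 * real N * p^2 \<le> 27 * d^2"
  proof -
    have "real N * p = real m * (real N / N0)" by (simp add: p_def)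
    also have "\<dots> \<le> (d * real n) * (3/2)"
      using m bounds(4) N0pos mpos by (intro mult_mono) (auto simp: field_simps)
    finally have Np: "real N * p \<le> 3/2 * d * real n" by simp
    have "(real N * p) * p \<le> (3/2 * d * real n) * (9 * d / real n)"
      by (rule mult_mono[OF Np p_hi]) (use d nr p0 in auto)
    then show ?thesis using nr by (simp add: power2_eq_square)
  qed
  have "exp (- (162 * d + 63 * d^2 + 1)) / (sqrt d * sqrt (real n))
      \<le> exp (- (2 * real m * \<epsilon>^2 + 2 * real m^2 / real N + 2 * real N * p^2 + 1)) / sqrt (real m)"
  proof (rule frac_le)
    show "exp (- (162 * d + 63 * d^2 + 1)) \<le> exp (- (2 * real m * \<epsilon>^2 + 2 * real m^2 / real N + 2 * real N * p^2 + 1))"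
      using K1 K2 K3 by simp
    show "0 < sqrt (real m)" using mpos by simp
    show "sqrt (real m) \<le> sqrt d * sqrt (real n)" using m by (simp add: real_sqrt_mult[symmetric])
  qed simp
  also have "\<dots> \<le> real (N choose m) * p ^ m * (1 - p) ^ (N - m)"
    using binomial_point_lower[OF _ mN p0 p1] mpos bounds(2) unfolding eps[symmetric] \<epsilon>_def by simp
  finally show "exp (- (162 * d + 63 * d^2 + 1)) / (sqrt d * sqrt (real n))
       \<le> real (N choose m) * p ^ m * (1 - p) ^ (N - m)" .
qed

section \<open>The two models conditioned on the colourings\<close>

lemma measure_pmf_bind_pmf_of_set:
  assumes "finite S" "S \<noteq> {}"
  shows "measure_pmf.prob (pmf_of_set S \<bind> f) X = (\<Sum>x\<in>S. measure_pmf.prob (f x) X) / card S"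
proof -
  have "emeasure (measure_pmf (pmf_of_set S \<bind> f)) X = (\<Sum>x\<in>S. emeasure (measure_pmf (f x)) X) / card S"
    using assms by (simp add: nn_integral_pmf_of_set)
  also have "\<dots> = ennreal ((\<Sum>x\<in>S. measure_pmf.prob (f x) X) / card S)"
    using assms by (simp add: measure_pmf.emeasure_eq_measure sum_nonneg divide_ennreal
        ennreal_of_nat_eq_real_of_nat card_gt_0_iff)
  finally show ?thesis
    by (simp add: measure_pmf.emeasure_eq_measure sum_nonneg divide_nonneg_nonneg)
qed

lemma pmf_Pi_pmf_bernoulli_indicator:
  assumes "finite B" "G \<subseteq> B" "0 \<le> p" "p \<le> 1"
  shows "pmf (Pi_pmf B False (\<lambda>_. bernoulli_pmf p)) (\<lambda>e. e \<in> G) = p ^ card G * (1 - p) ^ (card B - card G)"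
proof -
  have "pmf (Pi_pmf B False (\<lambda>_. bernoulli_pmf p)) (\<lambda>e. e \<in> G) = (\<Prod>e\<in>B. pmf (bernoulli_pmf p) (e \<in> G))"
    using assms(1,2) by (subst pmf_Pi) auto
  also have "\<dots> = (\<Prod>e\<in>B. if e \<in> G then p else 1 - p)"
    using assms(3,4) by (intro prod.cong) auto
  also have "\<dots> = (\<Prod>e\<in>B \<inter> {e. e \<in> G}. p) * (\<Prod>e\<in>B \<inter> - {e. e \<in> G}. 1 - p)"
    using assms(1) by (rule prod.If_cases)
  also have "B \<inter> {e. e \<in> G} = G" using assms(2) by blast
  also have "B \<inter> - {e. e \<in> G} = B - G" by blast
  finally show ?thesis using assms(1,2) by (simp add: card_Diff_subset finite_subset)
qed

lemma Fmono_eq: "Fmono n \<sigma> \<tau> = (n choose 2) - card (bichrom n \<sigma> \<tau>)"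
proof -
  have "{e \<in> vpairs n. \<exists>u v. e = {u, v} \<and> u \<noteq> v \<and> (\<sigma> u = \<sigma> v \<or> \<tau> u = \<tau> v)} = vpairs n - bichrom n \<sigma> \<tau>"
    unfolding bichrom_def by blast
  then show ?thesis
    unfolding Fmono_def card_vpairs[symmetric]
    using bichrom_subset_vpairs finite_bichrom by (simp add: card_Diff_subset)
qed

lemma properly_colored_graphs_eq:
  "{G. G \<subseteq> vpairs n \<and> card G = m \<and> proper_coloring G \<sigma> \<and> proper_coloring G \<tau>}
     = {G. G \<subseteq> bichrom n \<sigma> \<tau> \<and> card G = m}"
  unfolding proper_coloring_iff_bichromatic bichrom_eq by blast

definition event_graphs :: "(graph \<times> coloring \<times> coloring) set \<Rightarrow> nat \<Rightarrow> nat \<Rightarrow> coloring \<times> coloring \<Rightarrow> graph set"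
  where "event_graphs E n m s = {G. G \<subseteq> bichrom n (fst s) (snd s) \<and> card G = m \<and> (G, fst s, snd s) \<in> E}"

lemma card_event_graphs_le: "card (event_graphs E n m s) \<le> card (bichrom n (fst s) (snd s)) choose m"
proof -
  have "card (event_graphs E n m s) \<le> card {G. G \<subseteq> bichrom n (fst s) (snd s) \<and> card G = m}"
    unfolding event_graphs_def by (rule card_mono) (use finite_bichrom in auto)
  also have "\<dots> = card (bichrom n (fst s) (snd s)) choose m"
    by (rule n_subsets[OF finite_bichrom])
  finally show ?thesis .
qed

lemma prob_planted_replica:
  fixes n k m :: nat and E
  defines "T \<equiv> {(s1, s2). s1 \<in> colorings n k \<and> s2 \<in> colorings n k \<and> Fmono n s1 s2 \<le> (n choose 2) - m}"
  assumes "T \<noteq> {}" and "m \<le> n choose 2"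
  shows "measure_pmf.prob (planted_replica k n m) E =
     (\<Sum>s\<in>T. real (card (event_graphs E n m s)) / real (card (bichrom n (fst s) (snd s)) choose m))
       / real (card T)"
proof -
  have fin_T: "finite T"
    by (rule finite_subset[of _ "colorings n k \<times> colorings n k"]) (auto simp: T_def finite_colorings)
  have conditional: "measure_pmf.prob (case s of (s1, s2) \<Rightarrow> map_pmf (\<lambda>G. (G, s1, s2))
              (pmf_of_set {G. G \<subseteq> vpairs n \<and> card G = m \<and> proper_coloring G s1 \<and> proper_coloring G s2})) E
      = real (card (event_graphs E n m s)) / real (card (bichrom n (fst s) (snd s)) choose m)"
    if s: "s \<in> T" for s
  proof -
    obtain s1 s2 where s12: "s = (s1, s2)" by (cases s)
    let ?U = "{G. G \<subseteq> bichrom n s1 s2 \<and> card G = m}"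
    have card_U: "card ?U = card (bichrom n s1 s2) choose m"
      by (rule n_subsets[OF finite_bichrom])
    have "m \<le> card (bichrom n s1 s2)"
      using s assms(3) unfolding s12 T_def Fmono_eq by auto
    then have "?U \<noteq> {}"
      using card_U by (metis card.empty binomial_eq_0_iff not_less zero_less_iff_neq_zero)
    moreover have "?U \<inter> (\<lambda>G. (G, s1, s2)) -` E = event_graphs E n m s"
      unfolding s12 event_graphs_def by auto
    ultimately show ?thesis
      unfolding s12 properly_colored_graphs_eq using finite_bichrom card_U
      by (simp add: measure_pmf_of_set)
  qed
  show ?thesis
    unfolding planted_replica_def T_def[symmetric]
    by (simp add: measure_pmf_bind_pmf_of_set[OF fin_T assms(2)] conditional cong: sum.cong)
qed

lemma prob_binom_planted_replica_ge:
  fixes n k m :: nat and p :: real and E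
  assumes "0 \<le> p" "p \<le> 1" "1 \<le> k"
  defines "S \<equiv> colorings n k \<times> colorings n k"
  shows "(\<Sum>s\<in>S. real (card (event_graphs E n m s)) * (p ^ m * (1 - p) ^ (card (bichrom n (fst s) (snd s)) - m)))
           / real (card S)
         \<le> measure_pmf.prob (binom_planted_replica k n p) E"
proof -
  have "S \<noteq> {}"
    using assms(3) card_colorings[of n k] unfolding S_def by fastforce
  then have bind: "measure_pmf.prob (binom_planted_replica k n p) E
      = (\<Sum>s\<in>S. measure_pmf.prob ((\<lambda>(s1, s2). map_pmf (\<lambda>b. ({e \<in> bichrom n s1 s2. b e}, s1, s2))
          (Pi_pmf (bichrom n s1 s2) False (\<lambda>_. bernoulli_pmf p))) s) E) / real (card S)"
    unfolding binom_planted_replica_def S_def by (intro measure_pmf_bind_pmf_of_set) (simp_all add: finite_colorings)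
  have conditional:
    "real (card (event_graphs E n m s)) * (p ^ m * (1 - p) ^ (card (bichrom n (fst s) (snd s)) - m))
     \<le> measure_pmf.prob ((\<lambda>(s1, s2). map_pmf (\<lambda>b. ({e \<in> bichrom n s1 s2. b e}, s1, s2))
        (Pi_pmf (bichrom n s1 s2) False (\<lambda>_. bernoulli_pmf p))) s) E" for s
  proof -
    obtain s1 s2 where s12: "s = (s1, s2)" by (cases s)
    let ?B = "bichrom n s1 s2"
    let ?W = "event_graphs E n m s"
    let ?P = "Pi_pmf ?B False (\<lambda>_. bernoulli_pmf p)"
    let ?ind = "\<lambda>G e. e \<in> G"
    have fin_W: "finite ?W" using finite_bichrom by (simp add: event_graphs_def s12)
    have inj: "inj_on ?ind ?W" by (rule inj_onI) (auto simp: fun_eq_iff)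
    have sub: "?ind ` ?W \<subseteq> (\<lambda>b. ({e \<in> ?B. b e}, s1, s2)) -` E"
    proof
      fix b assume "b \<in> ?ind ` ?W"
      then obtain G where G: "G \<in> ?W" "b = ?ind G" by blast
      then have "{e \<in> ?B. b e} = G" by (auto simp: event_graphs_def s12)
      then show "b \<in> (\<lambda>b. ({e \<in> ?B. b e}, s1, s2)) -` E" using G by (simp add: event_graphs_def s12)
    qed
    have "real (card ?W) * (p ^ m * (1 - p) ^ (card ?B - m)) = (\<Sum>G\<in>?W. pmf ?P (?ind G))"
      using pmf_Pi_pmf_bernoulli_indicator[OF finite_bichrom _ assms(1,2)] by (simp add: event_graphs_def s12)
    also have "\<dots> = measure_pmf.prob ?P (?ind ` ?W)"
      using fin_W by (simp add: measure_measure_pmf_finite sum.reindex[OF inj])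
    also have "\<dots> \<le> measure_pmf.prob ?P ((\<lambda>b. ({e \<in> ?B. b e}, s1, s2)) -` E)"
      by (rule measure_pmf.finite_measure_mono[OF sub]) simp
    finally show ?thesis unfolding s12 by simp
  qed
  show ?thesis
    unfolding bind by (intro divide_right_mono sum_mono conditional) simp
qed

section \<open>Comparison of the two models\<close>

lemma average_le_by_good_part:
  fixes f g :: "'a \<Rightarrow> real"
  assumes "finite S" "S \<noteq> {}" "Good \<subseteq> T" "T \<subseteq> S"
    and f: "\<And>s. s \<in> S \<Longrightarrow> 0 \<le> f s \<and> f s \<le> 1" and g: "\<And>s. s \<in> S \<Longrightarrow> 0 \<le> g s"
    and c: "0 < c" and good: "\<And>s. s \<in> Good \<Longrightarrow> c * f s \<le> g s"
    and few_bad: "real (card (S - Good)) \<le> \<epsilon> * real (card S)" and "\<epsilon> \<le> 1/2"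
  shows "(\<Sum>s\<in>T. f s) / real (card T) \<le> 2 / c * ((\<Sum>s\<in>S. g s) / real (card S)) + 2 * \<epsilon>"
proof -
  have fin: "finite T" "finite Good" using assms(1,3,4) by (auto intro: finite_subset)
  have card_S: "0 < real (card S)" using assms(1,2) by (simp add: card_gt_0_iff)
  have "real (card S) = real (card Good) + real (card (S - Good))"
    using assms(1,3,4) fin by (simp add: card_Diff_subset card_mono)
  moreover have "\<epsilon> * real (card S) \<le> 1/2 * real (card S)"
    using \<open>\<epsilon> \<le> 1/2\<close> by (intro mult_right_mono) auto
  ultimately have "real (card S) / 2 \<le> real (card Good)"
    using few_bad by linarith
  also have "\<dots> \<le> real (card T)"
    using card_mono[OF fin(1) assms(3)] by simp
  finally have card_T: "real (card S) / 2 \<le> real (card T)" .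
  have "(\<Sum>s\<in>Good. f s) \<le> (\<Sum>s\<in>Good. g s / c)"
    using good c by (intro sum_mono) (simp add: field_simps mult.commute)
  also have "\<dots> \<le> (\<Sum>s\<in>S. g s) / c"
    unfolding sum_divide_distrib[symmetric] using c g assms(1,3,4)
    by (intro divide_right_mono sum_mono2) auto
  finally have sum_Good: "(\<Sum>s\<in>Good. f s) \<le> (\<Sum>s\<in>S. g s) / c" .
  have "(\<Sum>s\<in>T - Good. f s) \<le> real (card (T - Good))"
    using f assms(4) sum_mono[of "T - Good" f "\<lambda>_. 1"] by auto
  also have "\<dots> \<le> real (card (S - Good))"
    using assms(1,4) by (intro of_nat_mono card_mono) auto
  finally have sum_T: "(\<Sum>s\<in>T. f s) \<le> (\<Sum>s\<in>S. g s) / c + \<epsilon> * real (card S)"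
    using sum_Good few_bad sum.subset_diff[OF assms(3) fin(1), of f] by linarith
  have "(\<Sum>s\<in>T. f s) / real (card T) \<le> (\<Sum>s\<in>T. f s) / (real (card S) / 2)"
    using card_T card_S f assms(4)
    by (intro divide_left_mono sum_nonneg) auto
  also have "\<dots> \<le> ((\<Sum>s\<in>S. g s) / c + \<epsilon> * real (card S)) / (real (card S) / 2)"
    using sum_T card_S by (intro divide_right_mono) auto
  also have "\<dots> = 2 / c * ((\<Sum>s\<in>S. g s) / real (card S)) + 2 * \<epsilon>"
    using card_S c by (simp add: field_simps)
  finally show ?thesis .
qed

lemma planted_replica_le_binom_planted_replica:
  fixes k n :: nat and d :: real and E :: "(graph \<times> coloring \<times> coloring) set"
  assumes k: "3 \<le> k" and d: "0 < d" and n: "324 \<le> real n" "36 * d \<le> real n" "2 \<le> d * real n"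
  defines "m \<equiv> nat \<lceil>d * real n / 2\<rceil>"
  defines "p \<equiv> real m / (real (n choose 2) * (1 - 1 / real k)^2)"
  defines "c \<equiv> exp (- (162 * d + 63 * d^2 + 1)) / sqrt d"
  shows "measure_pmf.prob (planted_replica k n m) E
     \<le> 2 / c * sqrt (real n) * measure_pmf.prob (binom_planted_replica k n p) E + 1 / real n"
proof -
  let ?S = "colorings n k \<times> colorings n k"
  define N0 where "N0 = real (n choose 2) * (1 - 1 / real k)^2"
  define B where "B s = card (bichrom n (fst s) (snd s))" for s
  define T where "T = {(s1, s2). s1 \<in> colorings n k \<and> s2 \<in> colorings n k \<and> Fmono n s1 s2 \<le> (n choose 2) - m}"
  define Good where "Good = {s \<in> ?S. (real (B s) - N0)^2 \<le> real n ^ 3}"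
  define f where "f s = real (card (event_graphs E n m s)) / real (B s choose m)" for s
  define g where "g s = real (card (event_graphs E n m s)) * (p ^ m * (1 - p) ^ (B s - m))" for s
  have nr: "0 < real n" using n by simp
  have fin_S: "finite ?S" by (simp add: finite_colorings)
  have "?S \<noteq> {}" using k card_colorings[of n k] by fastforce
  have near_mean: "m \<le> B s \<and> 0 < p \<and> p \<le> 1
      \<and> c / sqrt (real n) \<le> real (B s choose m) * p ^ m * (1 - p) ^ (B s - m)" if "s \<in> Good" for s
  proof -
    have "real n ^ 2 / 9 \<le> N0" unfolding N0_def using k n by (intro expected_bichrom_ge) auto
    moreover note nat_ceiling_half_bounds[OF n(3), folded m_def]
    moreover have "(real (B s) - N0)^2 \<le> real n ^ 3" using that by (simp add: Good_def)
    ultimately show ?thesis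
      using binomial_point_lower_near_mean[OF n(1,2) d, of N0 m "B s"]
      by (simp add: p_def N0_def c_def real_sqrt_mult mult.commute)
  qed
  have "Good \<subseteq> T"
    using near_mean unfolding Good_def T_def B_def Fmono_eq by (auto intro: diff_le_mono2)
  have few_bad: "real (card (?S - Good)) \<le> 1 / (2 * real n) * real (card ?S)"
  proof -
    have "?S - Good = {s \<in> ?S. real n ^ 3 < (real (card (bichrom n (fst s) (snd s))) - N0)^2}"
      by (auto simp: Good_def B_def)
    then show ?thesis
      using card_bichrom_far_from_mean_le[of k n] k nr by (simp add: N0_def)
  qed
  obtain s0 where s0: "s0 \<in> Good"
    using few_bad \<open>?S \<noteq> {}\<close> n fin_S card_gt_0_iff[of ?S] by (cases "Good = {}") (auto simp: field_simps)
  have "B s0 \<le> n choose 2"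
    unfolding B_def card_vpairs[symmetric] by (rule card_mono[OF finite_vpairs bichrom_subset_vpairs])
  with near_mean[OF s0] have p: "0 \<le> p" "p \<le> 1" "m \<le> n choose 2"
    by auto
  have "measure_pmf.prob (planted_replica k n m) E = (\<Sum>s\<in>T. f s) / real (card T)"
    using prob_planted_replica[of n k m E, folded T_def] \<open>Good \<subseteq> T\<close> s0 p(3)
    unfolding f_def B_def by blast
  also have "\<dots> \<le> 2 / (c / sqrt (real n)) * ((\<Sum>s\<in>?S. g s) / real (card ?S)) + 2 * (1 / (2 * real n))"
  proof (rule average_le_by_good_part[OF fin_S \<open>?S \<noteq> {}\<close> \<open>Good \<subseteq> T\<close> _ _ _ _ _ few_bad])
    show "T \<subseteq> ?S" by (auto simp: T_def)
    show "0 \<le> f s \<and> f s \<le> 1" for s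
      using card_event_graphs_le[of E n m s]
      by (cases "B s choose m = 0") (auto simp: f_def B_def divide_le_eq_1)
    show "0 \<le> g s" for s using p by (simp add: g_def)
    show "0 < c / sqrt (real n)" using d nr by (simp add: c_def)
    show "c / sqrt (real n) * f s \<le> g s" if "s \<in> Good" for s
    proof -
      have "0 < real (B s choose m)" using near_mean[OF that] by simp
      then have "g s = f s * (real (B s choose m) * p ^ m * (1 - p) ^ (B s - m))"
        by (simp add: f_def g_def)
      moreover have "0 \<le> f s"
        by (simp add: f_def)
      ultimately show ?thesis
        using near_mean[OF that] mult_left_mono by (metis mult.commute)
    qed
    show "1 / (2 * real n) \<le> 1/2" using n by (simp add: field_simps)
  qed
  also have "\<dots> \<le> 2 / c * sqrt (real n) * measure_pmf.prob (binom_planted_replica k n p) E + 1 / real n"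
  proof -
    have "(\<Sum>s\<in>?S. g s) / real (card ?S) \<le> measure_pmf.prob (binom_planted_replica k n p) E"
      using prob_binom_planted_replica_ge[where p = p and k = k and n = n and m = m and E = E] p(1,2) k
      unfolding g_def B_def by simp
    moreover have "0 \<le> 2 / c * sqrt (real n)"
      using d by (simp add: c_def)
    ultimately have "2 / c * sqrt (real n) * ((\<Sum>s\<in>?S. g s) / real (card ?S))
        \<le> 2 / c * sqrt (real n) * measure_pmf.prob (binom_planted_replica k n p) E"
      by (rule mult_left_mono)
    then show ?thesis by simp
  qed
  finally show ?thesis .
qed

theorem lemma4p2:
  fixes k :: nat and d :: real
  assumes "k \<ge> 3" and "d > 0"
  defines "m \<equiv> (\<lambda>n::nat. nat \<lceil>d * real n / 2\<rceil>)"
  defines "p \<equiv> (\<lambda>n::nat. real (m n) / (real (n choose 2) * (1 - 1 / real k)^2))"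
  shows "\<exists>C::real. \<exists>\<delta>::nat \<Rightarrow> real. \<delta> \<longlonglongrightarrow> 0 \<and>
           (\<forall>\<^sub>F n in sequentially. \<forall>E :: (graph \<times> coloring \<times> coloring) set.
              measure_pmf.prob (planted_replica k n (m n)) E
                \<le> C * sqrt (real n) * measure_pmf.prob (binom_planted_replica k n (p n)) E + \<delta> n)"
proof -
  define c where "c = exp (- (162 * d + 63 * d^2 + 1)) / sqrt d"
  have "\<forall>\<^sub>F n in sequentially. 324 \<le> real n \<and> 36 * d \<le> real n \<and> 2 \<le> d * real n"
  proof (intro eventually_conj)
    show "\<forall>\<^sub>F n in sequentially. 2 \<le> d * real n"
      using filterlim_tendsto_pos_mult_at_top[OF tendsto_const assms(2) filterlim_real_sequentially]
      by (simp add: filterlim_at_top)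
  qed (simp_all add: filterlim_at_top filterlim_real_sequentially[unfolded filterlim_at_top, rule_format])
  then have "\<forall>\<^sub>F n in sequentially. \<forall>E :: (graph \<times> coloring \<times> coloring) set.
      measure_pmf.prob (planted_replica k n (m n)) E
        \<le> 2 / c * sqrt (real n) * measure_pmf.prob (binom_planted_replica k n (p n)) E + 1 / real n"
    by eventually_elim (use planted_replica_le_binom_planted_replica assms in \<open>simp add: m_def p_def c_def\<close>)
  with lim_1_over_n show ?thesis by blast
qed

end
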